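(* Let $p$ be an odd prime and let $\alpha,\beta\in\mathbb{Q}_p$. Suppose that the Browkin $p$-adic continued fraction expansions of $\alpha$ and $\beta$ have the same first $n+1$ partial quotients $b_0,b_1,\ldots,b_n$, and let $B_n$ be defined from these partial quotients by $B_{-2}=1$, $B_{-1}=0$, $B_i=b_iB_{i-1}+B_{i-2}$. Then $$\lvert \alpha-\beta\rvert_p<\frac{1}{\lvert B_n\rvert_p^2}.$$
   Context: Throughout, $p$ is an odd prime and $\lvert\cdot\rvert_p$ is the $p$-adic absolute value. Every $x\in\mathbb{Q}_p$ has a unique expansion $x=\sum_{i\ge r}a_ip^i$ with $r\in\mathbb{Z}$ and $a_i\in\{-\frac{p-1}{2},\ldots,\frac{p-1}{2}\}$; Browkin's function is $s(x)=\sum_{i=r}^{0}a_ip^i$ (so $s(x)=0$ if $r>0$). The Browkin continued fraction expansion $[b_0,b_1,\ldots]$ of $\alpha_0\in\mathbb{Q}_p$ is obtained by iterating $b_i=s(\alpha_i)$ and $\alpha_{i+1}=1/(\alpha_i-b_i)$ as long as $\alpha_i\neq b_i$; if $\alpha_i=b_i$ the expansion stops. The $b_i$ are the partial quotients. *)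

theory Defs
  imports Complex_Main "HOL-Computational_Algebra.Primes"
begin

definition pval :: "nat \<Rightarrow> rat \<Rightarrow> int" where
  "pval p q = (case quotient_of q of (a, b) \<Rightarrow>
       int (multiplicity (int p) a) - int (multiplicity (int p) b))"

definition pabs :: "nat \<Rightarrow> rat \<Rightarrow> real" where
  "pabs p q = (if q = 0 then 0 else real p powi (- pval p q))"

text \<open>Elements of Q_p are represented by p-adic Cauchy sequences of rationals
  (Q_p = completion of Q w.r.t. the p-adic absolute value).\<close>
definition padic_cauchy :: "nat \<Rightarrow> (nat \<Rightarrow> rat) \<Rightarrow> bool" where
  "padic_cauchy p X \<longleftrightarrow>
     (\<forall>e>0. \<exists>N. \<forall>m\<ge>N. \<forall>n\<ge>N. pabs p (X m - X n) < e)"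

definition padic_eq :: "nat \<Rightarrow> (nat \<Rightarrow> rat) \<Rightarrow> (nat \<Rightarrow> rat) \<Rightarrow> bool" where
  "padic_eq p X Y \<longleftrightarrow> (\<lambda>k. pabs p (X k - Y k)) \<longlonglongrightarrow> 0"

definition padic_abs :: "nat \<Rightarrow> (nat \<Rightarrow> rat) \<Rightarrow> real" where
  "padic_abs p X = lim (\<lambda>k. pabs p (X k))"

definition padic_inv :: "(nat \<Rightarrow> rat) \<Rightarrow> (nat \<Rightarrow> rat)" where
  "padic_inv X = (\<lambda>k. inverse (X k))"

definition browkin_S :: "nat \<Rightarrow> rat set" where
  "browkin_S p = {y. \<exists>(N::nat) (a::nat \<Rightarrow> int).
      (\<forall>i\<le>N. 2 * \<bar>a i\<bar> \<le> int p - 1) \<and>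
      y = (\<Sum>i\<le>N. of_int (a i) / of_nat p ^ i)}"

text \<open>Browkin's function s: the (unique) element of browkin_S p with
  |x - s(x)|_p < 1, i.e. the truncation of the balanced expansion of x at p^0.\<close>
definition browkin_s :: "nat \<Rightarrow> (nat \<Rightarrow> rat) \<Rightarrow> rat" where
  "browkin_s p X = (THE y. y \<in> browkin_S p \<and> padic_abs p (\<lambda>k. X k - y) < 1)"

text \<open>The complete quotients alpha_i (None once the expansion has stopped).\<close>
fun cf_state :: "nat \<Rightarrow> (nat \<Rightarrow> rat) \<Rightarrow> nat \<Rightarrow> (nat \<Rightarrow> rat) option" where
  "cf_state p X 0 = Some X"
| "cf_state p X (Suc i) = (case cf_state p X i of
      None \<Rightarrow> None
    | Some A \<Rightarrow> if padic_eq p A (\<lambda>_. browkin_s p A) then None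
                else Some (padic_inv (\<lambda>k. A k - browkin_s p A)))"

definition browkin_pq :: "nat \<Rightarrow> (nat \<Rightarrow> rat) \<Rightarrow> nat \<Rightarrow> rat option" where
  "browkin_pq p X i = map_option (browkin_s p) (cf_state p X i)"

text \<open>Bq b (i+2) = B_i, with B_{-2} = 1, B_{-1} = 0, B_i = b_i B_{i-1} + B_{i-2}.\<close>
fun Bq :: "(nat \<Rightarrow> rat) \<Rightarrow> nat \<Rightarrow> rat" where
  "Bq b 0 = 1"
| "Bq b (Suc 0) = 0"
| "Bq b (Suc (Suc i)) = b i * Bq b (Suc i) + Bq b i"

end

theory Submission
  imports Defs
begin

text \<open>
  Let \<open>x i\<close>, \<open>y i\<close> be rational approximations of the complete quotients of \<open>\<alpha>\<close> and \<open>\<beta>\<close>.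
  From \<open>x (i + 1) = 1 / (x i - b i)\<close> and \<open>\<bar>x i - b i\<bar>\<^sub>p < 1\<close> we get
  \<open>\<bar>x (i + 1)\<bar>\<^sub>p > 1\<close>, hence \<open>\<bar>b (i + 1)\<bar>\<^sub>p = \<bar>x (i + 1)\<bar>\<^sub>p\<close>, and by the ultrametric
  inequality the recurrence gives \<open>\<bar>B n\<bar>\<^sub>p = \<bar>b 1\<bar>\<^sub>p \<dots> \<bar>b n\<bar>\<^sub>p\<close>. Since
  \<open>x i - y i = (y (i + 1) - x (i + 1)) / (x (i + 1) y (i + 1))\<close>, it follows that
  \<open>\<bar>x 0 - y 0\<bar>\<^sub>p \<bar>B n\<bar>\<^sub>p\<^sup>2 = \<bar>x n - y n\<bar>\<^sub>p \<le> max \<bar>x n - b n\<bar>\<^sub>p \<bar>b n - y n\<bar>\<^sub>p < 1\<close>.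
  Elements of \<open>\<rat>\<^sub>p\<close> are represented by Cauchy sequences of rationals; the termwise
  complete quotients eventually satisfy all these relations, and since absolute values below 1
  are at most \<open>1 / p\<close>, the strict bound survives the limit.
\<close>

section \<open>The p-adic absolute value on the rationals\<close>

lemma rat_cases_int_fraction:
  fixes x :: rat
  obtains a b :: int where "x = of_int a / of_int b" "b \<noteq> 0"
proof -
  obtain a b where q: "quotient_of x = (a, b)" by (cases "quotient_of x")
  show ?thesis using that quotient_of_div[OF q] quotient_of_denom_pos[OF q] by auto
qed

lemma pval_int_fraction:
  assumes p: "prime p" and a: "a \<noteq> 0" and b: "b \<noteq> 0"
  shows "pval p (of_int a / of_int b) = int (multiplicity (int p) a) - int (multiplicity (int p) b)"
proof -
  obtain a' b' where q: "quotient_of (of_int a / of_int b) = (a', b')"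
    by (cases "quotient_of (of_int a / of_int b)")
  have e: "(of_int a / of_int b :: rat) = of_int a' / of_int b'" using quotient_of_div[OF q] .
  have b': "b' > 0" using quotient_of_denom_pos[OF q] .
  with e a b have a': "a' \<noteq> 0" by auto
  have "(of_int (a * b') :: rat) = of_int (a' * b)" using e b b' by (simp add: field_simps)
  hence "multiplicity (int p) (a * b') = multiplicity (int p) (a' * b)"
    by (simp only: of_int_eq_iff)
  hence "multiplicity (int p) a + multiplicity (int p) b'
      = multiplicity (int p) a' + multiplicity (int p) b"
    using p a b a' b' by (simp add: prime_elem_multiplicity_mult_distrib)
  thus ?thesis unfolding pval_def q by simp
qed

lemma pval_uminus:
  assumes p: "prime p" shows "pval p (- x) = pval p x"
proof (cases "x = 0")
  case False
  obtain a b where ab: "x = of_int a / of_int b" "b \<noteq> 0" by (rule rat_cases_int_fraction)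
  with False have a: "a \<noteq> 0" by auto
  have "pval p (- x) = pval p (of_int (- a) / of_int b)" using ab by simp
  also have "\<dots> = int (multiplicity (int p) (- a)) - int (multiplicity (int p) b)"
    using a ab by (intro pval_int_fraction[OF p]) auto
  also have "multiplicity (int p) (- a) = multiplicity (int p) a"
    using multiplicity_normalize_right[of "int p" "- a"] multiplicity_normalize_right[of "int p" a]
    by simp
  finally show ?thesis using a ab by (simp add: pval_int_fraction[OF p])
qed simp

lemma pval_mult:
  assumes p: "prime p" and x: "x \<noteq> 0" and y: "y \<noteq> 0"
  shows "pval p (x * y) = pval p x + pval p y"
proof -
  obtain a b where ab: "x = of_int a / of_int b" "b \<noteq> 0" by (rule rat_cases_int_fraction)
  obtain c d where cd: "y = of_int c / of_int d" "d \<noteq> 0" by (rule rat_cases_int_fraction)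
  from ab cd x y have "a \<noteq> 0" "c \<noteq> 0" by auto
  moreover have "x * y = of_int (a * c) / of_int (b * d)" using ab cd by simp
  ultimately show ?thesis using p ab cd
    by (simp add: pval_int_fraction prime_elem_multiplicity_mult_distrib del: of_int_mult)
qed

lemma prime_power_dvd_iff_le_multiplicity:
  assumes "prime p" and "m \<noteq> 0"
  shows "int p ^ k dvd m \<longleftrightarrow> k \<le> multiplicity (int p) m"
  using assms by (intro power_dvd_iff_le_multiplicity) (auto simp: prime_elem_not_unit)

lemma pval_add_ge_min:
  assumes p: "prime p" and x: "x \<noteq> 0" and y: "y \<noteq> 0" and xy: "x + y \<noteq> 0"
  shows "min (pval p x) (pval p y) \<le> pval p (x + y)"
proof -
  obtain a b where ab: "x = of_int a / of_int b" "b \<noteq> 0" by (rule rat_cases_int_fraction)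
  obtain c d where cd: "y = of_int c / of_int d" "d \<noteq> 0" by (rule rat_cases_int_fraction)
  from ab cd x y have ac: "a * d \<noteq> 0" "c * b \<noteq> 0" by auto
  have x': "x = of_int (a * d) / of_int (b * d)" and y': "y = of_int (c * b) / of_int (b * d)"
    and xy': "x + y = of_int (a * d + c * b) / of_int (b * d)"
    using ab cd by (simp_all add: field_simps)
  with xy have s: "a * d + c * b \<noteq> 0" by (metis div_0 of_int_0)
  define k where "k = min (multiplicity (int p) (a * d)) (multiplicity (int p) (c * b))"
  have "int p ^ k dvd a * d + c * b"
    unfolding k_def by (intro dvd_add multiplicity_dvd') simp_all
  hence "k \<le> multiplicity (int p) (a * d + c * b)"
    using prime_power_dvd_iff_le_multiplicity[OF p s] by blast
  thus ?thesis using p ab(2) cd(2) ac s unfolding xy' k_def unfolding x' y'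
    by (simp add: pval_int_fraction del: of_int_mult of_int_add)
qed

lemma pabs_nonneg: "pabs p x \<ge> 0"
  by (simp add: pabs_def)

lemma pabs_0 [simp]: "pabs p 0 = 0"
  by (simp add: pabs_def)

lemma pabs_1 [simp]: "pabs p 1 = 1"
  by (simp add: pabs_def pval_def)

lemma pabs_pos: "prime p \<Longrightarrow> x \<noteq> 0 \<Longrightarrow> pabs p x > 0"
  by (simp add: pabs_def prime_gt_0_nat)

lemma pabs_mult:
  assumes p: "prime p" shows "pabs p (x * y) = pabs p x * pabs p y"
proof (cases "x = 0 \<or> y = 0")
  case False
  have "real p powi (- pval p x + - pval p y) = real p powi (- pval p x) * real p powi (- pval p y)"
    using p power_int_add[of "real p" "- pval p x" "- pval p y"] by simp
  thus ?thesis using False by (simp add: pabs_def pval_mult[OF p])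
qed auto

lemma pabs_power2: "prime p \<Longrightarrow> pabs p (x\<^sup>2) = (pabs p x)\<^sup>2"
  by (simp add: power2_eq_square pabs_mult)

lemma pabs_inverse:
  assumes p: "prime p" shows "pabs p (inverse x) = inverse (pabs p x)"
proof (cases "x = 0")
  case False
  hence "pabs p x * pabs p (inverse x) = 1" by (simp flip: pabs_mult[OF p])
  thus ?thesis by (simp add: inverse_unique)
qed simp

lemma pabs_uminus: "prime p \<Longrightarrow> pabs p (- x) = pabs p x"
  by (simp add: pabs_def pval_uminus)

lemma pabs_minus_commute: "prime p \<Longrightarrow> pabs p (x - y) = pabs p (y - x)"
  using pabs_uminus[of p "x - y"] by simp

lemma pabs_add_le_max:
  assumes p: "prime p" shows "pabs p (x + y) \<le> max (pabs p x) (pabs p y)"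
proof (cases "x = 0 \<or> y = 0 \<or> x + y = 0")
  case True thus ?thesis by (auto simp: le_max_iff_disj pabs_nonneg)
next
  case False
  have "- pval p (x + y) \<le> - pval p x \<or> - pval p (x + y) \<le> - pval p y"
    using pval_add_ge_min[OF p, of x y] False by (auto simp: min_le_iff_disj)
  moreover have "real p \<ge> 1" using p prime_ge_1_nat by simp
  ultimately show ?thesis using False unfolding pabs_def
    by (auto simp: le_max_iff_disj intro: power_int_increasing)
qed

lemma pabs_diff_le_max:
  "prime p \<Longrightarrow> pabs p (x - z) \<le> max (pabs p (x - y)) (pabs p (y - z))"
  using pabs_add_le_max[of p "x - y" "y - z"] by simp

lemma pabs_add_eq_right:
  assumes p: "prime p" and less: "pabs p x < pabs p y" shows "pabs p (x + y) = pabs p y"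
proof -
  have "pabs p y \<le> max (pabs p (x + y)) (pabs p (- x))"
    using pabs_add_le_max[OF p, of "x + y" "- x"] by simp
  thus ?thesis using pabs_add_le_max[OF p, of x y] less by (auto simp: pabs_uminus[OF p])
qed

lemma pabs_less_one_iff:
  assumes p: "prime p" and x: "x \<noteq> 0" shows "pabs p x < 1 \<longleftrightarrow> pval p x > 0"
proof -
  have "real p > 1" using p prime_gt_1_nat by simp
  hence "real p powi (- pval p x) < 1 \<longleftrightarrow> - pval p x < 0"
    using one_le_power_int[of "real p" "- pval p x"] power_int_strict_increasing[of "- pval p x" 0]
    by fastforce
  thus ?thesis using x by (simp add: pabs_def)
qed

lemma pabs_less_one_imp_le:
  assumes p: "prime p" and less: "pabs p x < 1" shows "pabs p x \<le> 1 / real p"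
proof (cases "x = 0")
  case False
  with less have "- pval p x \<le> - 1" using pabs_less_one_iff[OF p] by simp
  hence "real p powi (- pval p x) \<le> real p powi (- 1)"
    using p prime_ge_1_nat by (intro power_int_increasing) auto
  thus ?thesis using False by (simp add: pabs_def power_int_minus divide_inverse)
qed simp

lemma pabs_int_fraction_less_one_iff:
  assumes p: "prime p" and w: "\<not> int p dvd w"
  shows "pabs p (of_int m / of_int (int p ^ N * w)) < 1 \<longleftrightarrow> int p ^ Suc N dvd m"
proof (cases "m = 0")
  case False
  have w0: "w \<noteq> 0" using w by auto
  have "multiplicity (int p) (int p ^ N * w) = N"
    using w p by (intro multiplicity_decomposeI) auto
  hence "pval p (of_int m / of_int (int p ^ N * w)) = int (multiplicity (int p) m) - int N"
    using p False w0 by (simp add: pval_int_fraction del: of_int_mult of_int_power)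
  moreover have "of_int m / of_int (int p ^ N * w) \<noteq> (0 :: rat)" using False w0 p by simp
  moreover have "int p ^ Suc N dvd m \<longleftrightarrow> Suc N \<le> multiplicity (int p) m"
    using prime_power_dvd_iff_le_multiplicity[OF p False] .
  ultimately show ?thesis by (simp add: pabs_less_one_iff[OF p] Suc_le_eq)
qed simp

section \<open>Balanced digit expansions\<close>

definition balanced_digits :: "nat \<Rightarrow> nat \<Rightarrow> (nat \<Rightarrow> int) \<Rightarrow> bool" where
  "balanced_digits p N a \<longleftrightarrow> (\<forall>i\<le>N. 2 * \<bar>a i\<bar> \<le> int p - 1)"

text \<open>The numerator of \<open>\<Sum>i\<le>N. a i / p ^ i\<close> over the denominator \<open>p ^ N\<close>.\<close>
definition digit_sum :: "nat \<Rightarrow> (nat \<Rightarrow> int) \<Rightarrow> nat \<Rightarrow> int" where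
  "digit_sum p a N = (\<Sum>i\<le>N. a i * int p ^ (N - i))"

lemma digit_sum_0 [simp]: "digit_sum p a 0 = a 0"
  by (simp add: digit_sum_def)

lemma digit_sum_Suc: "digit_sum p a (Suc N) = int p * digit_sum p a N + a (Suc N)"
proof -
  have "(\<Sum>i\<le>N. a i * int p ^ (Suc N - i)) = (\<Sum>i\<le>N. int p * (a i * int p ^ (N - i)))"
    by (rule sum.cong) (auto simp: Suc_diff_le)
  thus ?thesis by (simp add: digit_sum_def sum_distrib_left)
qed

lemma digit_sum_cong: "(\<And>i. i \<le> N \<Longrightarrow> a i = a' i) \<Longrightarrow> digit_sum p a N = digit_sum p a' N"
  unfolding digit_sum_def by (rule sum.cong) auto

lemma digit_sum_diff: "digit_sum p (\<lambda>i. a i - a' i) N = digit_sum p a N - digit_sum p a' N"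
  by (simp add: digit_sum_def sum_subtractf left_diff_distrib)

lemma of_int_digit_sum_divide:
  assumes "p > 0"
  shows "(of_int (digit_sum p a N) :: rat) / of_nat p ^ N = (\<Sum>i\<le>N. of_int (a i) / of_nat p ^ i)"
proof -
  have "(\<Sum>i\<le>N. of_int (a i) / of_nat p ^ i) * of_nat p ^ N
      = (\<Sum>i\<le>N. of_int (a i) * (of_nat p ^ N / of_nat p ^ i) :: rat)"
    by (simp add: sum_distrib_right)
  also have "\<dots> = (\<Sum>i\<le>N. of_int (a i) * of_nat p ^ (N - i))"
    by (rule sum.cong) (use assms in \<open>auto simp: power_diff\<close>)
  also have "\<dots> = of_int (digit_sum p a N)" by (simp add: digit_sum_def)
  finally show ?thesis using assms by (simp add: field_simps)
qed

lemma abs_digit_sum_le: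
  assumes "\<forall>i\<le>N. \<bar>a i\<bar> \<le> int p - 1"
  shows "\<bar>digit_sum p a N\<bar> \<le> int p ^ Suc N - 1"
  using assms
proof (induction N)
  case (Suc N)
  have "\<bar>digit_sum p a (Suc N)\<bar> \<le> int p * \<bar>digit_sum p a N\<bar> + \<bar>a (Suc N)\<bar>"
    unfolding digit_sum_Suc by (metis abs_mult abs_of_nat abs_triangle_ineq)
  also have "\<dots> \<le> int p * (int p ^ Suc N - 1) + (int p - 1)"
    using Suc by (intro add_mono mult_left_mono) auto
  finally show ?case by (simp add: algebra_simps)
qed simp

lemma exists_balanced_residue:
  assumes "odd p"
  shows "\<exists>d. 2 * \<bar>d\<bar> \<le> int p - 1 \<and> int p dvd Y - d"
proof -
  define r where "r = Y mod int p"
  have r: "0 \<le> r" "r < int p" "int p dvd Y - r"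
    using assms unfolding r_def by (auto simp: mod_0_imp_dvd minus_mod_eq_mult_div odd_pos)
  show ?thesis
  proof (cases "2 * r \<le> int p - 1")
    case True
    with r show ?thesis by (intro exI[of _ r]) auto
  next
    case False
    have "2 * r \<noteq> int p" using assms by (metis dvd_triv_left even_of_nat)
    with False r(2) have "2 * \<bar>r - int p\<bar> \<le> int p - 1" by (simp add: abs_if)
    moreover have "int p dvd (Y - r) + int p" using r(3) by (rule dvd_add) simp
    hence "int p dvd Y - (r - int p)" by (simp add: algebra_simps)
    ultimately show ?thesis by blast
  qed
qed

lemma exists_balanced_digits:
  assumes "odd p"
  shows "\<exists>a. balanced_digits p N a \<and> int p ^ Suc N dvd Y - digit_sum p a N"
proof (induction N arbitrary: Y)
  case 0
  obtain d where "2 * \<bar>d\<bar> \<le> int p - 1" "int p dvd Y - d"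
    using exists_balanced_residue[OF assms] by blast
  thus ?case by (intro exI[of _ "\<lambda>_. d"]) (simp add: balanced_digits_def)
next
  case (Suc N)
  obtain d where d: "2 * \<bar>d\<bar> \<le> int p - 1" "int p dvd Y - d"
    using exists_balanced_residue[OF assms] by blast
  then obtain Y' where Y': "Y - d = int p * Y'" by blast
  obtain a where a: "balanced_digits p N a" "int p ^ Suc N dvd Y' - digit_sum p a N"
    using Suc.IH by blast
  define a' where "a' = a(Suc N := d)"
  have "digit_sum p a' (Suc N) = int p * digit_sum p a N + d"
    unfolding digit_sum_Suc using digit_sum_cong[of N a' a p] by (simp add: a'_def)
  hence "Y - digit_sum p a' (Suc N) = int p * (Y' - digit_sum p a N)"
    using Y' by (simp add: algebra_simps)
  hence "int p ^ Suc (Suc N) dvd Y - digit_sum p a' (Suc N)"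
    using a(2) by (simp add: mult_dvd_mono)
  moreover have "balanced_digits p (Suc N) a'"
    using a(1) d(1) by (auto simp: balanced_digits_def a'_def le_Suc_eq)
  ultimately show ?case by blast
qed

lemma digit_sum_divide_in_browkin_S:
  "p > 0 \<Longrightarrow> balanced_digits p N a \<Longrightarrow> of_int (digit_sum p a N) / of_nat p ^ N \<in> browkin_S p"
  unfolding browkin_S_def balanced_digits_def by (auto simp: of_int_digit_sum_divide)

lemma browkin_S_obtain_digit_sum:
  assumes y: "y \<in> browkin_S p" and p: "p > 0"
  obtains N0 where
    "\<And>N. N \<ge> N0 \<Longrightarrow> \<exists>a. balanced_digits p N a \<and> y = of_int (digit_sum p a N) / of_nat p ^ N"
proof -
  obtain N0 a where a: "balanced_digits p N0 a" "y = (\<Sum>i\<le>N0. of_int (a i) / of_nat p ^ i)"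
    using y unfolding browkin_S_def balanced_digits_def by blast
  have "\<exists>a. balanced_digits p N a \<and> y = of_int (digit_sum p a N) / of_nat p ^ N"
    if N: "N \<ge> N0" for N
  proof -
    define a' where "a' i = (if i \<le> N0 then a i else 0)" for i
    have "(\<Sum>i\<le>N. of_int (a' i) / of_nat p ^ i) = (\<Sum>i\<le>N0. of_int (a' i) / (of_nat p ^ i :: rat))"
      by (rule sum.mono_neutral_right) (use N in \<open>auto simp: a'_def\<close>)
    also have "\<dots> = y" unfolding a(2) by (rule sum.cong) (auto simp: a'_def)
    finally show ?thesis
      using a(1) p
      by (intro exI[of _ a']) (auto simp: a'_def balanced_digits_def of_int_digit_sum_divide)
  qed
  thus ?thesis using that by blast
qed

lemma browkin_S_exists_near:
  assumes p: "prime p" and odd: "odd p"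
  shows "\<exists>y\<in>browkin_S p. pabs p (x - y) < 1"
proof -
  obtain u v where uv: "x = of_int u / of_int v" "v \<noteq> 0" by (rule rat_cases_int_fraction)
  define N where "N = multiplicity (int p) v"
  obtain w where w: "v = int p ^ N * w" "\<not> int p dvd w"
    using multiplicity_decompose'[of v "int p"] uv(2) prime_gt_1_nat[OF p] unfolding N_def by auto
  have "coprime w (int p ^ Suc N)"
    using p w(2) prime_imp_coprime[of "int p" w] by (simp add: coprime_commute)
  then obtain s t where st: "s * w + t * int p ^ Suc N = 1"
    using bezout_int[of w "int p ^ Suc N"] by (metis coprime_imp_gcd_eq_1)
  obtain a where a: "balanced_digits p N a" "int p ^ Suc N dvd s * u - digit_sum p a N"
    using exists_balanced_digits[OF odd] by blast
  define T where "T = digit_sum p a N"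
  \<comment> \<open>\<open>T\<close> is a balanced digit sum congruent to \<open>u / w\<close> modulo \<open>p ^ (N + 1)\<close>\<close>
  have "u - w * T = u * t * int p ^ Suc N + w * (s * u - T)"
    using arg_cong[OF st, of "(*) u"] by (simp add: algebra_simps)
  hence "int p ^ Suc N dvd u - w * T" using a(2) unfolding T_def by simp
  hence "pabs p (of_int (u - w * T) / of_int (int p ^ N * w)) < 1"
    by (simp only: pabs_int_fraction_less_one_iff[OF p w(2)])
  moreover have "x - of_int T / of_nat p ^ N = of_int (u - w * T) / of_int (int p ^ N * w)"
    using uv w p by (simp add: field_simps)
  moreover have "of_int T / of_nat p ^ N \<in> browkin_S p"
    unfolding T_def using a(1) p by (simp add: digit_sum_divide_in_browkin_S prime_gt_0_nat)
  ultimately show ?thesis by (metis (no_types))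
qed

lemma browkin_S_eq_if_near:
  assumes p: "prime p" and y1: "y1 \<in> browkin_S p" and y2: "y2 \<in> browkin_S p"
    and near: "pabs p (y1 - y2) < 1"
  shows "y1 = y2"
proof -
  have p0: "p > 0" using p prime_gt_0_nat by blast
  obtain N1 N2 where
    "\<And>N. N \<ge> N1 \<Longrightarrow> \<exists>a. balanced_digits p N a \<and> y1 = of_int (digit_sum p a N) / of_nat p ^ N"
    "\<And>N. N \<ge> N2 \<Longrightarrow> \<exists>a. balanced_digits p N a \<and> y2 = of_int (digit_sum p a N) / of_nat p ^ N"
    using browkin_S_obtain_digit_sum[OF y1 p0] browkin_S_obtain_digit_sum[OF y2 p0] by metis
  then obtain N a1 a2
    where a1: "balanced_digits p N a1" "y1 = of_int (digit_sum p a1 N) / of_nat p ^ N"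
    and a2: "balanced_digits p N a2" "y2 = of_int (digit_sum p a2 N) / of_nat p ^ N"
    by (metis max.cobounded1 max.cobounded2)
  define D where "D = digit_sum p (\<lambda>i. a1 i - a2 i) N"
  have "y1 - y2 = of_int D / of_int (int p ^ N * 1)"
    unfolding a1(2) a2(2) D_def digit_sum_diff by (simp add: diff_divide_distrib)
  moreover have "\<not> int p dvd 1" using prime_gt_1_nat[OF p] by auto
  ultimately have "int p ^ Suc N dvd D"
    using near pabs_int_fraction_less_one_iff[OF p] by metis
  moreover have "\<bar>D\<bar> < int p ^ Suc N"
    using abs_digit_sum_le[of N "\<lambda>i. a1 i - a2 i" p] a1(1) a2(1)
    unfolding D_def balanced_digits_def by fastforce
  ultimately have "D = 0" using dvd_imp_le_int by force
  thus ?thesis using a1(2) a2(2) digit_sum_diff[of p a1 a2 N] unfolding D_def by simp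
qed

section \<open>p-adic Cauchy sequences\<close>

lemma padic_cauchy_diff_const: "padic_cauchy p X \<Longrightarrow> padic_cauchy p (\<lambda>k. X k - c)"
  unfolding padic_cauchy_def by simp

lemma padic_cauchy_diff:
  assumes p: "prime p" and X: "padic_cauchy p X" and Y: "padic_cauchy p Y"
  shows "padic_cauchy p (\<lambda>k. X k - Y k)"
  unfolding padic_cauchy_def
proof (intro allI impI)
  fix e :: real assume "e > 0"
  then obtain N1 N2 where N1: "\<forall>m\<ge>N1. \<forall>n\<ge>N1. pabs p (X m - X n) < e"
    and N2: "\<forall>m\<ge>N2. \<forall>n\<ge>N2. pabs p (Y n - Y m) < e"
    using X Y unfolding padic_cauchy_def by meson
  have "pabs p ((X m - Y m) - (X n - Y n)) < e" if "m \<ge> max N1 N2" "n \<ge> max N1 N2" for m n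
  proof -
    have "pabs p ((X m - Y m) - (X n - Y n)) = pabs p ((X m - X n) + (Y n - Y m))"
      by (simp add: algebra_simps)
    also have "\<dots> \<le> max (pabs p (X m - X n)) (pabs p (Y n - Y m))"
      by (rule pabs_add_le_max[OF p])
    also have "\<dots> < e" using N1 N2 that by auto
    finally show ?thesis .
  qed
  thus "\<exists>N. \<forall>m\<ge>N. \<forall>n\<ge>N. pabs p (X m - Y m - (X n - Y n)) < e" by blast
qed

lemma padic_cauchy_pabs_eventually_const:
  assumes p: "prime p" and X: "padic_cauchy p X" and nonnull: "\<not> (\<lambda>k. pabs p (X k)) \<longlonglongrightarrow> 0"
  obtains c where "c > 0" "eventually (\<lambda>k. pabs p (X k) = c) sequentially"
proof -
  obtain e where e: "e > 0" "\<forall>N. \<exists>k\<ge>N. pabs p (X k) \<ge> e"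
    using nonnull pabs_nonneg unfolding LIMSEQ_iff by (auto simp: not_less)
  obtain N where N: "\<forall>m\<ge>N. \<forall>n\<ge>N. pabs p (X m - X n) < e"
    using X e(1) unfolding padic_cauchy_def by blast
  obtain k where k: "k \<ge> N" "pabs p (X k) \<ge> e" using e(2) by blast
  have "pabs p (X m) = pabs p (X k)" if "m \<ge> N" for m
  proof -
    have "pabs p (X m - X k) < pabs p (X k)" using N k that by force
    hence "pabs p ((X m - X k) + X k) = pabs p (X k)" by (rule pabs_add_eq_right[OF p])
    thus ?thesis by simp
  qed
  moreover have "pabs p (X k) > 0" using k e by simp
  ultimately show ?thesis using that unfolding eventually_sequentially by blast
qed

lemma padic_cauchy_pabs_tendsto:
  assumes p: "prime p" and X: "padic_cauchy p X"
  shows "(\<lambda>k. pabs p (X k)) \<longlonglongrightarrow> padic_abs p X"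
proof -
  have "convergent (\<lambda>k. pabs p (X k))"
  proof (cases "(\<lambda>k. pabs p (X k)) \<longlonglongrightarrow> 0")
    case False
    then obtain c where "eventually (\<lambda>k. pabs p (X k) = c) sequentially"
      using padic_cauchy_pabs_eventually_const[OF p X] by blast
    hence "(\<lambda>k. pabs p (X k)) \<longlonglongrightarrow> c" by (rule tendsto_eventually)
    thus ?thesis by (auto simp: convergent_def)
  qed (auto simp: convergent_def)
  thus ?thesis unfolding padic_abs_def by (simp add: convergent_LIMSEQ_iff)
qed

lemma padic_cauchy_padic_inv:
  assumes p: "prime p" and X: "padic_cauchy p X" and nonnull: "\<not> (\<lambda>k. pabs p (X k)) \<longlonglongrightarrow> 0"
  shows "padic_cauchy p (padic_inv X)"
  unfolding padic_cauchy_def padic_inv_def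
proof (intro allI impI)
  fix e :: real assume e: "e > 0"
  obtain c where c: "c > 0" "eventually (\<lambda>k. pabs p (X k) = c) sequentially"
    using padic_cauchy_pabs_eventually_const[OF p X nonnull] by blast
  then obtain N0 where N0: "\<forall>k\<ge>N0. pabs p (X k) = c" unfolding eventually_sequentially by blast
  obtain N1 where N1: "\<forall>m\<ge>N1. \<forall>n\<ge>N1. pabs p (X n - X m) < e * c * c"
    using X e c(1) unfolding padic_cauchy_def by (meson mult_pos_pos)
  have "pabs p (inverse (X m) - inverse (X n)) < e" if "m \<ge> max N0 N1" "n \<ge> max N0 N1" for m n
  proof -
    have cm: "pabs p (X m) = c" and cn: "pabs p (X n) = c" using N0 that by auto
    hence "X m \<noteq> 0" "X n \<noteq> 0" using c(1) by auto
    hence "inverse (X m) - inverse (X n) = (X n - X m) * inverse (X m * X n)"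
      by (simp add: field_simps)
    hence "pabs p (inverse (X m) - inverse (X n)) = pabs p (X n - X m) / (c * c)"
      using cm cn by (simp add: pabs_mult[OF p] pabs_inverse[OF p] divide_inverse)
    moreover have "pabs p (X n - X m) < e * c * c" using N1 that by auto
    ultimately show ?thesis using c(1) by (simp add: divide_less_eq mult.assoc)
  qed
  thus "\<exists>N. \<forall>m\<ge>N. \<forall>n\<ge>N. pabs p (inverse (X m) - inverse (X n)) < e" by blast
qed

text \<open>Discreteness of the absolute value keeps a strict bound \<open>< 1\<close> intact in the limit.\<close>
lemma padic_abs_mult_pabs_less_one:
  assumes p: "prime p" and X: "padic_cauchy p X"
    and less: "eventually (\<lambda>k. pabs p (X k * q) < 1) sequentially"
  shows "padic_abs p X * pabs p q < 1"
proof -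
  have "eventually (\<lambda>k. pabs p (X k) * pabs p q \<le> 1 / real p) sequentially"
    using less by eventually_elim (simp add: pabs_less_one_imp_le[OF p] flip: pabs_mult[OF p])
  hence "padic_abs p X * pabs p q \<le> 1 / real p"
    using padic_cauchy_pabs_tendsto[OF p X]
    by (intro tendsto_le[OF sequentially_bot tendsto_const]) (auto intro: tendsto_mult_right)
  also have "\<dots> < 1" using prime_gt_1_nat[OF p] by simp
  finally show ?thesis .
qed

lemma browkin_s_spec:
  assumes p: "prime p" and odd: "odd p" and X: "padic_cauchy p X"
  shows "browkin_s p X \<in> browkin_S p \<and> padic_abs p (\<lambda>k. X k - browkin_s p X) < 1"
proof -
  have near_eventually: "eventually (\<lambda>k. pabs p (X k - y) < 1) sequentially"
    if "padic_abs p (\<lambda>k. X k - y) < 1" for y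
    using order_tendstoD(2)[OF padic_cauchy_pabs_tendsto[OF p padic_cauchy_diff_const[OF X]] that] .
  have "\<exists>y. y \<in> browkin_S p \<and> padic_abs p (\<lambda>k. X k - y) < 1"
  proof -
    obtain N where N: "\<forall>m\<ge>N. \<forall>n\<ge>N. pabs p (X m - X n) < 1"
      using X unfolding padic_cauchy_def by (meson zero_less_one)
    obtain y where y: "y \<in> browkin_S p" "pabs p (X N - y) < 1"
      using browkin_S_exists_near[OF p odd] by blast
    have "pabs p ((X k - y) * 1) < 1" if "k \<ge> N" for k
      using pabs_diff_le_max[OF p, where y = "X N", of "X k" y] N[rule_format, OF that order.refl]
        y(2)
      by simp
    hence "eventually (\<lambda>k. pabs p ((X k - y) * 1) < 1) sequentially"
      unfolding eventually_sequentially by blast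
    from padic_abs_mult_pabs_less_one[OF p padic_cauchy_diff_const[OF X] this] y(1)
    show ?thesis by auto
  qed
  moreover have "y1 = y2"
    if "y1 \<in> browkin_S p \<and> padic_abs p (\<lambda>k. X k - y1) < 1"
      and "y2 \<in> browkin_S p \<and> padic_abs p (\<lambda>k. X k - y2) < 1" for y1 y2
  proof -
    have "eventually (\<lambda>k. pabs p (X k - y1) < 1 \<and> pabs p (X k - y2) < 1) sequentially"
      using near_eventually that by (auto intro: eventually_conj)
    then obtain k where "pabs p (X k - y1) < 1" "pabs p (X k - y2) < 1"
      unfolding eventually_sequentially by blast
    hence "pabs p (y1 - y2) < 1"
      using pabs_diff_le_max[OF p, where y = "X k", of y1 y2] pabs_minus_commute[OF p, of y1]
      by simp
    thus ?thesis using browkin_S_eq_if_near[OF p] that by blast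
  qed
  ultimately have "\<exists>!y. y \<in> browkin_S p \<and> padic_abs p (\<lambda>k. X k - y) < 1" by blast
  from theI'[OF this] show ?thesis unfolding browkin_s_def .
qed

section \<open>Complete quotients and the estimate\<close>

lemma cf_state_SucD:
  assumes "cf_state p X (Suc i) = Some A'"
  obtains A where "cf_state p X i = Some A" "\<not> padic_eq p A (\<lambda>_. browkin_s p A)"
    "A' = padic_inv (\<lambda>k. A k - browkin_s p A)"
  using assms that by (cases "cf_state p X i") (auto split: if_splits)

lemma cf_state_padic_cauchy:
  assumes p: "prime p" and X: "padic_cauchy p X"
  shows "cf_state p X i = Some A \<Longrightarrow> padic_cauchy p A"
proof (induction i arbitrary: A)
  case 0
  thus ?case using X by simp
next
  case (Suc i)
  obtain A0 where "cf_state p X i = Some A0" "\<not> padic_eq p A0 (\<lambda>_. browkin_s p A0)"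
    "A = padic_inv (\<lambda>k. A0 k - browkin_s p A0)"
    using Suc.prems by (rule cf_state_SucD)
  with Suc.IH show ?case
    unfolding padic_eq_def by (simp add: padic_cauchy_padic_inv[OF p] padic_cauchy_diff_const)
qed

lemma cf_state_eventually_recursion:
  assumes p: "prime p" and X: "padic_cauchy p X" and A': "cf_state p X (Suc i) = Some A'"
  obtains A where "cf_state p X i = Some A"
    "eventually (\<lambda>k. A k \<noteq> browkin_s p A \<and> A' k = inverse (A k - browkin_s p A)) sequentially"
proof -
  obtain A where A: "cf_state p X i = Some A" "\<not> padic_eq p A (\<lambda>_. browkin_s p A)"
    "A' = padic_inv (\<lambda>k. A k - browkin_s p A)"
    using A' by (rule cf_state_SucD)
  have nonnull: "\<not> (\<lambda>k. pabs p (A k - browkin_s p A)) \<longlonglongrightarrow> 0"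
    using A(2) by (simp add: padic_eq_def)
  have "padic_cauchy p (\<lambda>k. A k - browkin_s p A)"
    using cf_state_padic_cauchy[OF p X A(1)] by (rule padic_cauchy_diff_const)
  then obtain c where c: "c > 0" "eventually (\<lambda>k. pabs p (A k - browkin_s p A) = c) sequentially"
    using padic_cauchy_pabs_eventually_const[OF p _ nonnull] by blast
  from c(2) have
    "eventually (\<lambda>k. A k \<noteq> browkin_s p A \<and> A' k = inverse (A k - browkin_s p A)) sequentially"
    by eventually_elim (use c(1) in \<open>auto simp: A(3) padic_inv_def\<close>)
  with A(1) show ?thesis using that by blast
qed

lemma cf_state_eventually_near:
  assumes p: "prime p" and odd: "odd p" and X: "padic_cauchy p X" and A: "cf_state p X i = Some A"
  shows "eventually (\<lambda>k. pabs p (A k - browkin_s p A) < 1) sequentially"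
proof -
  have "padic_cauchy p A" using cf_state_padic_cauchy[OF p X A] .
  with browkin_s_spec[OF p odd] show ?thesis
    by (intro order_tendstoD(2)[OF padic_cauchy_pabs_tendsto[OF p padic_cauchy_diff_const]]) auto
qed

text \<open>The rational counterpart of a Browkin expansion: \<open>x 0 = [b 0, \<dots>, b (n - 1), x n]\<close>
  with \<open>\<bar>x i - b i\<bar>\<^sub>p < 1\<close> for all \<open>i \<le> n\<close>.\<close>
definition cf_quotients :: "nat \<Rightarrow> (nat \<Rightarrow> rat) \<Rightarrow> nat \<Rightarrow> (nat \<Rightarrow> rat) \<Rightarrow> bool" where
  "cf_quotients p b n x \<longleftrightarrow>
     (\<forall>i<n. x i \<noteq> b i \<and> x (Suc i) = inverse (x i - b i)) \<and> (\<forall>i\<le>n. pabs p (x i - b i) < 1)"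

lemma browkin_pq_eventually_cf_quotients:
  assumes p: "prime p" and odd: "odd p" and X: "padic_cauchy p X"
    and pq: "\<forall>i\<le>n. browkin_pq p X i = Some (b i)"
  obtains A where "A 0 = X" "eventually (\<lambda>k. cf_quotients p b n (\<lambda>i. A i k)) sequentially"
proof -
  define A where "A i = the (cf_state p X i)" for i
  have state: "cf_state p X i = Some (A i)" "browkin_s p (A i) = b i" if "i \<le> n" for i
    using pq that unfolding browkin_pq_def A_def by (cases "cf_state p X i"; force)+
  have "eventually (\<lambda>k. A i k \<noteq> b i \<and> A (Suc i) k = inverse (A i k - b i)) sequentially"
    if i: "i < n" for i
    using cf_state_eventually_recursion[OF p X state(1)[of "Suc i"]] state[of i] i by fastforce
  hence "eventually (\<lambda>k. \<forall>i\<in>{..<n}. A i k \<noteq> b i \<and> A (Suc i) k = inverse (A i k - b i)) sequentially"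
    by (intro eventually_ball_finite) auto
  moreover have "eventually (\<lambda>k. \<forall>i\<in>{..n}. pabs p (A i k - b i) < 1) sequentially"
    using cf_state_eventually_near[OF p odd X state(1)] state(2)
    by (intro eventually_ball_finite) auto
  ultimately have "eventually (\<lambda>k. cf_quotients p b n (\<lambda>i. A i k)) sequentially"
    unfolding cf_quotients_def Ball_def lessThan_iff atMost_iff by (rule eventually_conj)
  moreover have "A 0 = X" by (simp add: A_def)
  ultimately show ?thesis using that by blast
qed

lemma pabs_Bq_eq_prod:
  assumes p: "prime p" and big: "\<And>j. 1 \<le> j \<Longrightarrow> j \<le> n \<Longrightarrow> 1 < pabs p (b j)"
  shows "pabs p (Bq b (n + 2)) = (\<Prod>j=1..n. pabs p (b j))"
proof -
  have "pabs p (Bq b (Suc (Suc n))) = (\<Prod>j=1..n. pabs p (b j))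
      \<and> pabs p (Bq b (Suc n)) < (\<Prod>j=1..n. pabs p (b j))"
    using big
  proof (induction n)
    case (Suc n)
    define P where "P = (\<Prod>j=1..n. pabs p (b j))"
    have IH: "pabs p (Bq b (Suc (Suc n))) = P" "pabs p (Bq b (Suc n)) < P"
      using Suc unfolding P_def by auto
    have "1 \<le> P" unfolding P_def using Suc.prems by (intro prod_ge_1) (auto intro: less_imp_le)
    moreover have "1 < pabs p (b (Suc n))" using Suc.prems by simp
    ultimately have grow: "P < pabs p (b (Suc n)) * P" by simp
    have "pabs p (Bq b (Suc (Suc (Suc n))))
        = pabs p (Bq b (Suc n) + b (Suc n) * Bq b (Suc (Suc n)))"
      by (simp add: add.commute)
    also have "\<dots> = pabs p (b (Suc n)) * P"
      using IH grow by (intro trans[OF pabs_add_eq_right[OF p]]) (simp_all add: pabs_mult[OF p])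
    finally show ?case
      using IH grow by (simp add: P_def prod.cl_ivl_Suc mult.commute)
  qed simp
  thus ?thesis by (simp add: numeral_2_eq_2)
qed

lemma cf_quotients_pabs:
  assumes p: "prime p" and x: "cf_quotients p b n x" and j: "1 \<le> j" "j \<le> n"
  shows "1 < pabs p (x j)" and "pabs p (b j) = pabs p (x j)"
proof -
  obtain i where i: "j = Suc i" using j by (cases j) auto
  have "x i \<noteq> b i" "x j = inverse (x i - b i)" "pabs p (x i - b i) < 1"
    using x j unfolding cf_quotients_def i by auto
  thus x_big: "1 < pabs p (x j)"
    by (simp add: pabs_inverse[OF p] pabs_pos[OF p] one_less_inverse)
  have "pabs p (b j - x j) < pabs p (x j)"
    using x j x_big pabs_minus_commute[OF p, of "b j"] unfolding cf_quotients_def by force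
  thus "pabs p (b j) = pabs p (x j)" using pabs_add_eq_right[OF p] by fastforce
qed

lemma cf_quotients_pabs_diff:
  assumes p: "prime p" and x: "cf_quotients p b n x" and y: "cf_quotients p b n y" and i: "i \<le> n"
  shows "pabs p (x 0 - y 0) * (\<Prod>j=1..i. pabs p (b j))\<^sup>2 = pabs p (x i - y i)"
  using i
proof (induction i)
  case (Suc i)
  have quot: "x i - b i = inverse (x (Suc i))" "y i - b i = inverse (y (Suc i))"
    and "x (Suc i) \<noteq> 0" "y (Suc i) \<noteq> 0"
    using x y Suc.prems unfolding cf_quotients_def by auto
  have "x i - y i = (x i - b i) - (y i - b i)" by simp
  also have "\<dots> = inverse (x (Suc i)) - inverse (y (Suc i))" by (simp only: quot)
  also have "\<dots> = (y (Suc i) - x (Suc i)) * inverse (x (Suc i) * y (Suc i))"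
    using \<open>x (Suc i) \<noteq> 0\<close> \<open>y (Suc i) \<noteq> 0\<close> by (simp add: field_simps)
  finally have "pabs p (x i - y i)
      = pabs p (x (Suc i) - y (Suc i)) * inverse (pabs p (x (Suc i)) * pabs p (y (Suc i)))"
    by (simp add: pabs_mult[OF p] pabs_inverse[OF p] pabs_minus_commute[OF p, of "y (Suc i)"])
  moreover have "pabs p (x (Suc i)) = pabs p (b (Suc i))" "pabs p (y (Suc i)) = pabs p (b (Suc i))"
    "pabs p (b (Suc i)) > 0"
    using cf_quotients_pabs[OF p x, of "Suc i"] cf_quotients_pabs[OF p y, of "Suc i"] Suc.prems
    by auto
  ultimately have "pabs p (x (Suc i) - y (Suc i)) = pabs p (x i - y i) * (pabs p (b (Suc i)))\<^sup>2"
    by (simp add: field_simps power2_eq_square)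
  thus ?case using Suc by (simp add: prod.cl_ivl_Suc power_mult_distrib)
qed simp

lemma cf_quotients_pabs_diff_Bq:
  assumes p: "prime p" and x: "cf_quotients p b n x" and y: "cf_quotients p b n y"
  shows "pabs p ((x 0 - y 0) * (Bq b (n + 2))\<^sup>2) < 1"
proof -
  have "pabs p (Bq b (n + 2)) = (\<Prod>j=1..n. pabs p (b j))"
    using cf_quotients_pabs[OF p x] by (intro pabs_Bq_eq_prod[OF p]) simp
  hence "pabs p ((x 0 - y 0) * (Bq b (n + 2))\<^sup>2) = pabs p (x n - y n)"
    using cf_quotients_pabs_diff[OF p x y order.refl]
    by (simp add: pabs_mult[OF p] pabs_power2[OF p])
  also have "\<dots> \<le> max (pabs p (x n - b n)) (pabs p (b n - y n))" by (rule pabs_diff_le_max[OF p])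
  also have "\<dots> < 1"
    using x y pabs_minus_commute[OF p, of "b n"] unfolding cf_quotients_def by auto
  finally show ?thesis .
qed

theorem lemma1:
  fixes p n :: nat and X Y :: "nat \<Rightarrow> rat" and b :: "nat \<Rightarrow> rat"
  assumes "prime p" and "odd p"
    and "padic_cauchy p X" and "padic_cauchy p Y"
    and "\<forall>i\<le>n. browkin_pq p X i = Some (b i) \<and> browkin_pq p Y i = Some (b i)"
  shows "padic_abs p (\<lambda>k. X k - Y k) * (pabs p (Bq b (n + 2)))\<^sup>2 < 1"
proof -
  note p = assms(1) and odd = assms(2)
  obtain A where A: "A 0 = X" "eventually (\<lambda>k. cf_quotients p b n (\<lambda>i. A i k)) sequentially"
    using browkin_pq_eventually_cf_quotients[OF p odd assms(3)] assms(5) by blast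
  obtain A' where A': "A' 0 = Y" "eventually (\<lambda>k. cf_quotients p b n (\<lambda>i. A' i k)) sequentially"
    using browkin_pq_eventually_cf_quotients[OF p odd assms(4)] assms(5) by blast
  from A(2) A'(2) have "eventually (\<lambda>k. pabs p ((X k - Y k) * (Bq b (n + 2))\<^sup>2) < 1) sequentially"
    by eventually_elim (metis A(1) A'(1) cf_quotients_pabs_diff_Bq[OF p])
  from padic_abs_mult_pabs_less_one[OF p padic_cauchy_diff[OF p assms(3,4)] this]
  show ?thesis by (simp add: pabs_power2[OF p])
qed

end
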